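(* Let $0<\beta\le1$ and let $x$ be real with $0\le\frac{(1+\beta)^2x}{4\beta}<1$. Then $$\lim_{t\to\infty}{}_3F_2\!\left(\begin{matrix}1,\ t\frac{1+\beta}{2}+1,\ t\frac{1+\beta}{2}+\frac12\\ t+1,\ t\beta+1\end{matrix};x\right)=\frac{1}{1-\frac{(1+\beta)^2x}{4\beta}},$$ uniformly on compact subsets of this region.
   Context: ${}_3F_2\!\left(\begin{matrix}a,b,c\\ d,e\end{matrix};x\right)=\sum_{n\ge0}\frac{(a)_n(b)_n(c)_n}{(d)_n(e)_n}\frac{x^n}{n!}$ for $|x|<1$, with $(q)_0=1$, $(q)_n=q(q+1)\cdots(q+n-1)$; $t>0$ is a real parameter tending to $\infty$. *)

theory Defs
  imports "HOL-Analysis.Analysis"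
begin

text \<open>Generalized hypergeometric series 3F2 (real parameters, real argument),
  defined as the sum of the series; meaningful for |x| < 1.\<close>
definition hyp3F2 :: "real \<Rightarrow> real \<Rightarrow> real \<Rightarrow> real \<Rightarrow> real \<Rightarrow> real \<Rightarrow> real" where
  "hyp3F2 a b c d e x =
     (\<Sum>n. (pochhammer a n * pochhammer b n * pochhammer c n)
           / (pochhammer d n * pochhammer e n) * x ^ n / fact n)"

end

theory Submission
  imports Defs "HOL-Real_Asymp.Real_Asymp"
begin

text \<open>With first parameter 1 the factorial cancels, and the \<open>n\<close>-th coefficient becomes a product
  of \<open>n\<close> ratios \<open>coeff_ratio \<beta> t k\<close>. For \<open>t \<ge> 0\<close> each ratio lies in \<open>[0, R]\<close> with
  \<open>R = (1+\<beta>)\<^sup>2/(4\<beta>) \<ge> 1\<close>, and it tends to \<open>R\<close> as \<open>t \<rightarrow> \<infinity>\<close>. On \<open>|x| \<le> r\<close> with \<open>R r < 1\<close> the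
  series is therefore dominated, uniformly in \<open>t\<close>, by the geometric series \<open>\<Sum> (R r)\<^sup>n\<close>, and
  Tannery's theorem gives uniform convergence to \<open>\<Sum> (R x)\<^sup>n = 1/(1 - R x)\<close>.\<close>

lemma pochhammer_quotient_eq_prod:
  fixes a b c d :: "'a::field"
  shows "pochhammer a n * pochhammer b n / (pochhammer c n * pochhammer d n) =
    (\<Prod>k<n. (a + of_nat k) * (b + of_nat k) / ((c + of_nat k) * (d + of_nat k)))"
  by (simp add: pochhammer_prod prod_dividef prod.distrib atLeast0LessThan)

lemma hyp3F2_one_left:
  "hyp3F2 1 b c d e x =
     (\<Sum>n. pochhammer b n * pochhammer c n / (pochhammer d n * pochhammer e n) * x ^ n)"
  unfolding hyp3F2_def pochhammer_fact[symmetric] by (simp add: mult.assoc)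

lemma norm_diff_mult_le:
  fixes u v :: "'a::real_normed_vector"
  assumes "norm u \<le> C" "norm v \<le> C" "0 \<le> s"
  shows "norm (u - v) * s \<le> 2 * (C * s)"
proof -
  have "norm (u - v) \<le> 2 * C"
    using norm_triangle_ineq4[of u v] assms(1,2) by linarith
  from mult_right_mono[OF this assms(3)] show ?thesis
    by (simp add: mult.assoc)
qed

lemma norm_suminf_power_diff_le:
  fixes c a :: "nat \<Rightarrow> 'a::{real_normed_field,banach}"
  assumes c: "\<And>n. norm (c n) \<le> C n" and a: "\<And>n. norm (a n) \<le> C n"
    and C_summable: "summable (\<lambda>n. C n * r ^ n)" and x: "norm x \<le> r"
  shows "norm ((\<Sum>n. c n * x ^ n) - (\<Sum>n. a n * x ^ n)) \<le> (\<Sum>n. norm (c n - a n) * r ^ n)"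
proof -
  have r: "0 \<le> r" using x norm_ge_zero order_trans by blast
  have xn: "norm (x ^ n) \<le> r ^ n" for n
    by (simp add: norm_power power_mono x)
  have summable_dominated: "summable (\<lambda>n. b n * x ^ n)" if "\<And>n. norm (b n) \<le> C n" for b
    by (rule summable_comparison_test[OF _ C_summable])
       (auto simp: norm_mult intro!: exI mult_mono that xn order_trans[OF norm_ge_zero that])
  have diff_le: "norm ((c n - a n) * x ^ n) \<le> norm (c n - a n) * r ^ n" for n
    by (simp add: norm_mult mult_left_mono xn)
  have diff_summable: "summable (\<lambda>n. norm (c n - a n) * r ^ n)"
  proof (rule summable_comparison_test[OF _ summable_mult[OF C_summable, of 2]])
    show "\<exists>N. \<forall>n\<ge>N. norm (norm (c n - a n) * r ^ n) \<le> 2 * (C n * r ^ n)"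
      using norm_diff_mult_le[OF c a zero_le_power[OF r]] r by auto
  qed
  have "(\<Sum>n. c n * x ^ n) - (\<Sum>n. a n * x ^ n) = (\<Sum>n. (c n - a n) * x ^ n)"
    using suminf_diff[OF summable_dominated[OF c] summable_dominated[OF a]]
    by (simp add: algebra_simps)
  also have "norm \<dots> \<le> (\<Sum>n. norm (c n - a n) * r ^ n)"
    by (rule norm_suminf_le[OF diff_le diff_summable])
  finally show ?thesis .
qed

lemma uniform_limit_power_series_dominated:
  fixes c :: "'b \<Rightarrow> nat \<Rightarrow> 'a::{real_normed_field,banach}"
  assumes lim: "\<And>n. ((\<lambda>t. c t n) \<longlongrightarrow> a n) F"
    and bound: "eventually (\<lambda>t. \<forall>n. norm (c t n) \<le> C n) F"
    and C_summable: "summable (\<lambda>n. C n * r ^ n)" and r: "0 \<le> r"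
  shows "uniform_limit (cball 0 r) (\<lambda>t x. \<Sum>n. c t n * x ^ n) (\<lambda>x. \<Sum>n. a n * x ^ n) F"
proof (cases "F = bot")
  case True
  then show ?thesis by (simp add: uniform_limit_iff)
next
  case False
  have a_bound: "norm (a n) \<le> C n" for n
    by (rule tendsto_upperbound[OF tendsto_norm[OF lim] _ False])
       (use bound in \<open>auto elim: eventually_mono\<close>)
  have "((\<lambda>t. \<Sum>n. norm (c t n - a n) * r ^ n) \<longlongrightarrow> (\<Sum>n. 0)) F"
  proof (rule tannerys_theorem[THEN conjunct2, THEN conjunct2])
    show "((\<lambda>t. norm (c t n - a n) * r ^ n) \<longlongrightarrow> 0) F" for n
    proof -
      have "((\<lambda>t. norm (c t n - a n) * r ^ n) \<longlongrightarrow> norm (a n - a n) * r ^ n) F"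
        by (intro tendsto_intros lim)
      then show ?thesis by simp
    qed
    show "summable (\<lambda>n. 2 * (C n * r ^ n))"
      using C_summable by (rule summable_mult)
    show "eventually (\<lambda>(n, t). norm (norm (c t n - a n) * r ^ n) \<le> 2 * (C n * r ^ n))
            (at_top \<times>\<^sub>F F)"
      using eventually_prodI[OF eventually_True bound]
      by (rule eventually_mono) (auto intro: norm_diff_mult_le simp: r a_bound)
  qed (fact False)
  then have "uniform_limit (cball 0 r) (\<lambda>t _. \<Sum>n. norm (c t n - a n) * r ^ n) (\<lambda>_. 0) F"
    by (auto simp: uniform_limit_iff tendsto_iff)
  then show ?thesis
  proof (rule metric_uniform_limit_imp_uniform_limit)
    show "eventually (\<lambda>t. \<forall>x\<in>cball 0 r. dist (\<Sum>n. c t n * x ^ n) (\<Sum>n. a n * x ^ n)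
            \<le> dist (\<Sum>n. norm (c t n - a n) * r ^ n) 0) F"
      using bound
    proof eventually_elim
      case (elim t)
      show ?case
      proof
        fix x :: 'a assume "x \<in> cball 0 r"
        then have "norm x \<le> r" by simp
        from norm_suminf_power_diff_le[of "c t" C a, OF _ a_bound C_summable this] elim
        show "dist (\<Sum>n. c t n * x ^ n) (\<Sum>n. a n * x ^ n) \<le> dist (\<Sum>n. norm (c t n - a n) * r ^ n) 0"
          by (simp add: dist_norm)
      qed
    qed
  qed
qed

definition coeff_ratio :: "real \<Rightarrow> real \<Rightarrow> nat \<Rightarrow> real" where
  "coeff_ratio \<beta> t k = (t*(1+\<beta>)/2 + 1 + k) * (t*(1+\<beta>)/2 + 1/2 + k) / ((t + 1 + k) * (t*\<beta> + 1 + k))"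

lemma hyp3F2_eq_suminf_prod_coeff_ratio:
  "hyp3F2 1 (t*(1+\<beta>)/2 + 1) (t*(1+\<beta>)/2 + 1/2) (t + 1) (t*\<beta> + 1) x =
     (\<Sum>n. (\<Prod>k<n. coeff_ratio \<beta> t k) * x ^ n)"
  unfolding hyp3F2_one_left pochhammer_quotient_eq_prod coeff_ratio_def ..

lemma coeff_ratio_nonneg:
  assumes "0 < \<beta>" "0 \<le> t"
  shows "0 \<le> coeff_ratio \<beta> t k"
  using assms unfolding coeff_ratio_def by (simp add: add_nonneg_nonneg)

lemma coeff_ratio_le:
  assumes \<beta>: "0 < \<beta>" and t: "0 \<le> t"
  shows "coeff_ratio \<beta> t k \<le> (1+\<beta>)^2 / (4*\<beta>)"
proof -
  define R where "R = (1+\<beta>)^2 / (4*\<beta>)"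
  define s where "s = t*(1+\<beta>)/2"
  define m where "m = 1 + real k"
  have "(1+\<beta>)^2 = 4*\<beta> + (1-\<beta>)^2"
    by (simp add: power2_eq_square algebra_simps)
  then have "4*\<beta> \<le> (1+\<beta>)^2"
    by simp
  then have R_ge_1: "1 \<le> R"
    unfolding R_def using \<beta> by simp
  have s: "0 \<le> s" and m: "1 \<le> m"
    unfolding s_def m_def using \<beta> t by auto
  have "(s + m) * (s + m - 1/2) \<le> (s + m)^2"
    using s m by (simp add: power2_eq_square mult_left_mono)
  also have "\<dots> = s^2 + t*m*(1+\<beta>) + m^2"
    unfolding s_def by (simp add: power2_eq_square field_simps)
  also have "\<dots> \<le> s^2 + R*(t*m*(1+\<beta>)) + R*m^2"
  proof -
    have "1 * (t*m*(1+\<beta>)) \<le> R*(t*m*(1+\<beta>))"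
      using \<beta> t m by (intro mult_right_mono[OF R_ge_1]) simp
    moreover have "1 * m^2 \<le> R*m^2"
      by (intro mult_right_mono[OF R_ge_1]) simp
    ultimately show ?thesis
      by linarith
  qed
  also have "\<dots> = R * ((t + m) * (t*\<beta> + m))"
    unfolding R_def s_def using \<beta> by (simp add: power2_eq_square field_simps)
  finally have "(s + m) * (s + m - 1/2) \<le> R * ((t + m) * (t*\<beta> + m))" .
  moreover have "0 < (t + m) * (t*\<beta> + m)"
    using \<beta> t m by (intro mult_pos_pos) (simp_all add: add_nonneg_pos)
  ultimately show ?thesis
    unfolding coeff_ratio_def R_def[symmetric]
    by (simp add: pos_divide_le_eq s_def m_def algebra_simps)
qed

lemma tendsto_coeff_ratio:
  assumes "0 < \<beta>"
  shows "((\<lambda>t. coeff_ratio \<beta> t k) \<longlongrightarrow> (1+\<beta>)^2 / (4*\<beta>)) at_top"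
proof -
  have "((\<lambda>t. coeff_ratio \<beta> t k) \<longlongrightarrow> (1+\<beta>) * (1+\<beta>) * inverse \<beta> / 4) at_top"
    using assms unfolding coeff_ratio_def by real_asymp
  then show ?thesis
    by (simp add: power2_eq_square field_simps)
qed

lemma hyp3F2_uniform_limit_cball:
  fixes \<beta> r :: real
  assumes \<beta>: "0 < \<beta>" and r: "0 \<le> r" "(1+\<beta>)^2 * r / (4*\<beta>) < 1"
  shows "uniform_limit (cball 0 r)
           (\<lambda>t x. hyp3F2 1 (t*(1+\<beta>)/2 + 1) (t*(1+\<beta>)/2 + 1/2) (t + 1) (t*\<beta> + 1) x)
           (\<lambda>x. 1 / (1 - (1+\<beta>)^2 * x / (4*\<beta>))) at_top"
proof -
  define R where "R = (1+\<beta>)^2 / (4*\<beta>)"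
  have R: "0 \<le> R" "R * r < 1"
    using \<beta> r unfolding R_def by simp_all
  have lim: "((\<lambda>t. \<Prod>k<n. coeff_ratio \<beta> t k) \<longlongrightarrow> R ^ n) at_top" for n
    using tendsto_prod[of "{..<n}", OF tendsto_coeff_ratio[OF \<beta>]] unfolding R_def by simp
  have bound: "eventually (\<lambda>t. \<forall>n. norm (\<Prod>k<n. coeff_ratio \<beta> t k) \<le> R ^ n) at_top"
    using eventually_ge_at_top[of 0]
  proof eventually_elim
    case (elim t)
    have "0 \<le> coeff_ratio \<beta> t k" "coeff_ratio \<beta> t k \<le> R" for k
      using coeff_ratio_nonneg[OF \<beta> elim] coeff_ratio_le[OF \<beta> elim] unfolding R_def by auto
    then show ?case
      using prod_mono[of "{..<n}" "coeff_ratio \<beta> t" "\<lambda>_. R" for n]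
      by (simp add: prod_nonneg abs_of_nonneg)
  qed
  have "summable (\<lambda>n. R ^ n * r ^ n)"
    using R r by (simp add: power_mult_distrib[symmetric] summable_geometric)
  from uniform_limit_power_series_dominated[OF lim bound this r(1)]
  have conv: "uniform_limit (cball 0 r) (\<lambda>t x. \<Sum>n. (\<Prod>k<n. coeff_ratio \<beta> t k) * x ^ n)
          (\<lambda>x. \<Sum>n. R ^ n * x ^ n) at_top" .
  have geometric: "(\<Sum>n. R ^ n * x ^ n) = 1 / (1 - (1+\<beta>)^2 * x / (4*\<beta>))" if "x \<in> cball 0 r" for x
  proof -
    have "\<bar>R * x\<bar> < 1"
      using that R mult_left_mono[of "\<bar>x\<bar>" r R] by (simp add: abs_mult)
    then have "(\<Sum>n. R ^ n * x ^ n) = 1 / (1 - R * x)"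
      using suminf_geometric[of "R * x"] by (simp add: power_mult_distrib)
    also have "R * x = (1+\<beta>)^2 * x / (4*\<beta>)"
      unfolding R_def by simp
    finally show ?thesis .
  qed
  show ?thesis
    unfolding hyp3F2_eq_suminf_prod_coeff_ratio using conv
    by (rule uniform_limit_cong'[THEN iffD1, rotated 2]) (simp_all add: geometric)
qed

lemma hyp3F2_uniform_limit_compact:
  fixes \<beta> :: real
  assumes \<beta>: "0 < \<beta>" and K: "compact K"
    "K \<subseteq> {x. 0 \<le> (1+\<beta>)^2 * x / (4*\<beta>) \<and> (1+\<beta>)^2 * x / (4*\<beta>) < 1}"
  shows "uniform_limit K
           (\<lambda>t x. hyp3F2 1 (t*(1+\<beta>)/2 + 1) (t*(1+\<beta>)/2 + 1/2) (t + 1) (t*\<beta> + 1) x)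
           (\<lambda>x. 1 / (1 - (1+\<beta>)^2 * x / (4*\<beta>))) at_top"
proof (cases "K = {}")
  case False
  obtain r where r: "r \<in> K" "\<And>x. x \<in> K \<Longrightarrow> x \<le> r"
    using compact_attains_sup[OF K(1) False] by blast
  have nonneg: "0 \<le> x" if "x \<in> K" for x
  proof -
    have "0 \<le> (1+\<beta>)^2 * x / (4*\<beta>)"
      using K(2) that by auto
    moreover have "0 < (1+\<beta>)^2" "0 < 4*\<beta>"
      using \<beta> by (simp_all add: add_pos_nonneg)
    ultimately show ?thesis
      by (simp add: zero_le_divide_iff zero_le_mult_iff)
  qed
  have "K \<subseteq> cball 0 r"
    using nonneg r(2) by (auto simp: dist_real_def)
  moreover have "0 \<le> r" "(1+\<beta>)^2 * r / (4*\<beta>) < 1"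
    using r(1) K(2) nonneg by auto
  ultimately show ?thesis
    using uniform_limit_on_subset[OF hyp3F2_uniform_limit_cball[OF \<beta>]] by blast
qed simp

theorem corollary1:
  fixes \<beta> :: real
  assumes "0 < \<beta>" and "\<beta> \<le> 1"
  shows "(\<forall>x::real. 0 \<le> (1+\<beta>)^2 * x / (4*\<beta>) \<and> (1+\<beta>)^2 * x / (4*\<beta>) < 1 \<longrightarrow>
           ((\<lambda>t. hyp3F2 1 (t*(1+\<beta>)/2 + 1) (t*(1+\<beta>)/2 + 1/2) (t + 1) (t*\<beta> + 1) x)
              \<longlongrightarrow> 1 / (1 - (1+\<beta>)^2 * x / (4*\<beta>))) at_top) \<and>
         (\<forall>K::real set. compact K \<and>
           K \<subseteq> {x. 0 \<le> (1+\<beta>)^2 * x / (4*\<beta>) \<and> (1+\<beta>)^2 * x / (4*\<beta>) < 1} \<longrightarrow>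
           uniform_limit K
             (\<lambda>t x. hyp3F2 1 (t*(1+\<beta>)/2 + 1) (t*(1+\<beta>)/2 + 1/2) (t + 1) (t*\<beta> + 1) x)
             (\<lambda>x. 1 / (1 - (1+\<beta>)^2 * x / (4*\<beta>))) at_top)"
proof (intro conjI allI impI)
  fix x :: real
  assume "0 \<le> (1+\<beta>)^2 * x / (4*\<beta>) \<and> (1+\<beta>)^2 * x / (4*\<beta>) < 1"
  then show "((\<lambda>t. hyp3F2 1 (t*(1+\<beta>)/2 + 1) (t*(1+\<beta>)/2 + 1/2) (t + 1) (t*\<beta> + 1) x)
              \<longlongrightarrow> 1 / (1 - (1+\<beta>)^2 * x / (4*\<beta>))) at_top"
    using hyp3F2_uniform_limit_compact[OF assms(1), of "{x}"] by simp
qed (use hyp3F2_uniform_limit_compact[OF assms(1)] in blast)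

end
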